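(* Let $\mathcal G_i=G_i^S\cup G_i^I$ and $\mathcal G_j=G_j^S\cup G_j^I$ be two networks with vertex-disjoint state graphs $G_i^S=(V_i^S,E_i^S)$, $G_j^S=(V_j^S,E_j^S)$ and disjoint sets of input nodes, and suppose both $\mathcal G_i$ and $\mathcal G_j$ are strongly structurally controllable (SSC). Let the bridge graph between them consist of exactly one edge $\{k,l\}$ with $k\in V_i^S$, $l\in V_j^S$ (arbitrary). Then the merged network, whose state graph has vertex set $V_i^S\cup V_j^S$ and edge set $E_i^S\cup E_j^S\cup\{\{k,l\}\}$ and whose input nodes are those of $\mathcal G_i$ together with those of $\mathcal G_j$ (attached as before), is SSC, regardless of the choice of $k$ and $l$.
   Context: Network model: a network $\mathcal G=G^S\cup G^I$ consists of an undirected simple state graph $G^S$ on state nodes $\{1,\dots,n\}$ and a set of $m$ external input nodes $u_1,\dots,u_m$, where each input node $u_r$ has exactly one directed edge, to a state node $v_r$, and the $v_r$ are pairwise distinct; the input matrix is $B=[e_{v_1},\dots,e_{v_m}]\in\mathbb R^{n\times m}$ (standard basis vectors). The dynamics are $\dot x=Mx+Bu$, where $M$ ranges over the family $Q(G^S)$ of symmetric matrices with $M_{ij}=a_{ij}>0$ if $\{i,j\}$ is an edge of $G^S$, $M_{ij}=0$ if $i\ne j$ are non-adjacent, and $M_{ii}=-\sum_{j\in\mathcal N_i}a_{ij}+a_{ii}$ with an arbitrary self-loop weight $a_{ii}<0$ ($\mathcal N_i$ the neighbours of $i$ in $G^S$). The network is strongly structurally controllable (SSC) if for every $M\in Q(G^S)$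 the controllability matrix $[B,MB,\dots,M^{n-1}B]$ has rank $n$. A bridge graph between two vertex-disjoint state graphs is a set of edges each joining a node of one to a node of the other, such that every node is incident to at most one bridge edge. *)

theory Defs
  imports Complex_Main
begin

text \<open>Vectors in R^V are functions 'a \<Rightarrow> real (only values on V matter);
  matrices in R^{V x V} are functions 'a \<Rightarrow> 'a \<Rightarrow> real.\<close>

definition state_graph :: "'a set \<Rightarrow> ('a \<Rightarrow> 'a \<Rightarrow> bool) \<Rightarrow> bool" where
  "state_graph V E \<longleftrightarrow> finite V \<and>
     (\<forall>i j. E i j \<longrightarrow> i \<in> V \<and> j \<in> V \<and> i \<noteq> j \<and> E j i)"

definition network :: "'a set \<Rightarrow> ('a \<Rightarrow> 'a \<Rightarrow> bool) \<Rightarrow> 'b set \<Rightarrow> ('b \<Rightarrow> 'a) \<Rightarrow> bool" where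
  "network V E I att \<longleftrightarrow> state_graph V E \<and> finite I \<and> att ` I \<subseteq> V \<and> inj_on att I"

definition in_Q :: "'a set \<Rightarrow> ('a \<Rightarrow> 'a \<Rightarrow> bool) \<Rightarrow> ('a \<Rightarrow> 'a \<Rightarrow> real) \<Rightarrow> bool" where
  "in_Q V E M \<longleftrightarrow>
     (\<forall>i\<in>V. \<forall>j\<in>V. M i j = M j i) \<and>
     (\<forall>i\<in>V. \<forall>j\<in>V. i \<noteq> j \<longrightarrow> (E i j \<longrightarrow> M i j > 0) \<and> (\<not> E i j \<longrightarrow> M i j = 0)) \<and>
     (\<forall>i\<in>V. \<exists>a. a < 0 \<and> M i i = - (\<Sum>j\<in>{j\<in>V. E i j}. M i j) + a)"

definition mat_vec :: "'a set \<Rightarrow> ('a \<Rightarrow> 'a \<Rightarrow> real) \<Rightarrow> ('a \<Rightarrow> real) \<Rightarrow> ('a \<Rightarrow> real)" where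
  "mat_vec V M x = (\<lambda>i. \<Sum>j\<in>V. M i j * x j)"

definition unit_vec :: "'a \<Rightarrow> ('a \<Rightarrow> real)" where
  "unit_vec v = (\<lambda>j. if j = v then 1 else 0)"

text \<open>Column (r,k) of the controllability matrix [B, MB, ..., M^{n-1}B]: M^k e_{att r}.
  The matrix has rank n = card V iff its column space is all of R^V.\<close>
definition controllable :: "'a set \<Rightarrow> ('a \<Rightarrow> 'a \<Rightarrow> real) \<Rightarrow> 'b set \<Rightarrow> ('b \<Rightarrow> 'a) \<Rightarrow> bool" where
  "controllable V M I att \<longleftrightarrow>
     (\<forall>x :: 'a \<Rightarrow> real. \<exists>c :: 'b \<Rightarrow> nat \<Rightarrow> real. \<forall>i\<in>V.
        x i = (\<Sum>r\<in>I. \<Sum>k<card V. c r k * ((mat_vec V M ^^ k) (unit_vec (att r))) i))"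

definition SSC :: "'a set \<Rightarrow> ('a \<Rightarrow> 'a \<Rightarrow> bool) \<Rightarrow> 'b set \<Rightarrow> ('b \<Rightarrow> 'a) \<Rightarrow> bool" where
  "SSC V E I att \<longleftrightarrow> (\<forall>M. in_Q V E M \<longrightarrow> controllable V M I att)"

end

theory Submission
  imports Defs "HOL-Analysis.Analysis"
begin

(*
  Every matrix of the joined network is symmetric, so by the Popov-Belevitch-Hautus test it
  suffices to show that an eigenvector w vanishing at all input nodes is zero.  On either side,
  w satisfies the eigenvalue equation of that side's matrix up to a single term at the bridge
  node, coming from the bridge entry.  Strong structural controllability is blind to the
  diagonal, since any diagonal can be shifted into Q.  So if w k were nonzero, the bridge term
  would be a diagonal perturbation and w would vanish on the first network, contradicting
  w k \<noteq> 0.  Hence w k = 0, w is an eigenvector on the second network and vanishes there; in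
  particular w l = 0, and then w vanishes on the first network as well.
*)

definition inner_on :: "'a set \<Rightarrow> ('a \<Rightarrow> real) \<Rightarrow> ('a \<Rightarrow> real) \<Rightarrow> real" where
  "inner_on V x y = (\<Sum>i\<in>V. x i * y i)"

definition lincomb :: "'j set \<Rightarrow> ('j \<Rightarrow> real) \<Rightarrow> ('j \<Rightarrow> 'a \<Rightarrow> real) \<Rightarrow> 'a \<Rightarrow> real" where
  "lincomb J c f = (\<lambda>i. \<Sum>j\<in>J. c j * f j i)"

lemma inner_on_commute: "inner_on V x y = inner_on V y x"
  unfolding inner_on_def by (simp add: mult.commute)

lemma inner_on_lincomb_left: "inner_on V (lincomb J c f) y = (\<Sum>j\<in>J. c j * inner_on V (f j) y)"
  unfolding inner_on_def lincomb_def
  by (simp add: sum_distrib_left sum_distrib_right sum.swap[of _ J V] mult.assoc)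

lemma inner_on_lincomb_right: "inner_on V y (lincomb J c f) = (\<Sum>j\<in>J. c j * inner_on V y (f j))"
  unfolding inner_on_def lincomb_def
  by (simp add: sum_distrib_left sum_distrib_right sum.swap[of _ J V] mult.left_commute)

lemma inner_on_diff_left: "inner_on V (\<lambda>i. x i - z i) y = inner_on V x y - inner_on V z y"
  unfolding inner_on_def by (simp add: left_diff_distrib sum_subtractf)

lemma inner_on_diff_right: "inner_on V y (\<lambda>i. x i - z i) = inner_on V y x - inner_on V y z"
  unfolding inner_on_def by (simp add: right_diff_distrib sum_subtractf)

lemma inner_on_add_left: "inner_on V (\<lambda>i. x i + z i) y = inner_on V x y + inner_on V z y"
  unfolding inner_on_def by (simp add: distrib_right sum.distrib)

lemma inner_on_add_right: "inner_on V y (\<lambda>i. x i + z i) = inner_on V y x + inner_on V y z"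
  unfolding inner_on_def by (simp add: distrib_left sum.distrib)

lemma inner_on_scale_left: "inner_on V (\<lambda>i. a * x i) y = a * inner_on V x y"
  unfolding inner_on_def by (simp add: sum_distrib_left mult.assoc)

lemma inner_on_scale_right: "inner_on V y (\<lambda>i. a * x i) = a * inner_on V y x"
  unfolding inner_on_def by (simp add: sum_distrib_left mult.left_commute)

lemma inner_on_cong:
  "(\<And>i. i \<in> V \<Longrightarrow> x i = x' i) \<Longrightarrow> (\<And>i. i \<in> V \<Longrightarrow> y i = y' i) \<Longrightarrow>
    inner_on V x y = inner_on V x' y'"
  unfolding inner_on_def by (rule sum.cong) auto

lemma inner_on_self_nonneg: "inner_on V x x \<ge> 0"
  unfolding inner_on_def by (rule sum_nonneg) simp

lemma inner_on_self_eq_0: "finite V \<Longrightarrow> inner_on V x x = 0 \<Longrightarrow> i \<in> V \<Longrightarrow> x i = 0"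
  unfolding inner_on_def using sum_nonneg_eq_0_iff[of V "\<lambda>i. x i * x i"] by auto

lemma inner_on_self_pos: "finite V \<Longrightarrow> i \<in> V \<Longrightarrow> x i \<noteq> 0 \<Longrightarrow> inner_on V x x > 0"
  using inner_on_self_nonneg[of V x] inner_on_self_eq_0[of V x i] by force

lemma inner_on_unit_vec: "finite V \<Longrightarrow> i \<in> V \<Longrightarrow> inner_on V x (unit_vec i) = x i"
  unfolding inner_on_def unit_vec_def by (simp add: if_distrib cong: if_cong)

lemma continuous_on_inner_on:
  fixes f g :: "'b::topological_space \<Rightarrow> 'a \<Rightarrow> real"
  assumes "continuous_on S f" and "continuous_on S g"
  shows "continuous_on S (\<lambda>v. inner_on V (f v) (g v))"
  unfolding inner_on_def
  by (intro continuous_on_sum continuous_on_mult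
      continuous_on_product_then_coordinatewise[OF assms(1)]
      continuous_on_product_then_coordinatewise[OF assms(2)])

lemma mat_vec_cong: "(\<And>i. i \<in> V \<Longrightarrow> x i = y i) \<Longrightarrow> mat_vec V M x = mat_vec V M y"
  unfolding mat_vec_def by (intro ext sum.cong) auto

lemma mat_vec_lincomb: "mat_vec V M (lincomb J c f) = lincomb J c (\<lambda>j. mat_vec V M (f j))"
  unfolding mat_vec_def lincomb_def
  by (intro ext) (simp add: sum_distrib_left sum.swap[of _ J V] mult.left_commute)

lemma mat_vec_add_scale:
  "mat_vec V M (\<lambda>i. x i + a * y i) = (\<lambda>i. mat_vec V M x i + a * mat_vec V M y i)"
  unfolding mat_vec_def by (simp add: distrib_left sum.distrib sum_distrib_left mult.left_commute)

lemma mat_vec_scale: "mat_vec V M (\<lambda>i. a * y i) = (\<lambda>i. a * mat_vec V M y i)"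
  unfolding mat_vec_def by (simp add: sum_distrib_left mult.left_commute)

lemma mat_vec_diag_update:
  assumes "finite V" and "i \<in> V"
  shows "mat_vec V (\<lambda>i j. if i = j then D i else M i j) w i = mat_vec V M w i + (D i - M i i) * w i"
proof -
  have "mat_vec V (\<lambda>i j. if i = j then D i else M i j) w i
      = (\<Sum>j\<in>V. M i j * w j + (if j = i then (D i - M i i) * w j else 0))"
    unfolding mat_vec_def by (intro sum.cong) (auto simp: algebra_simps)
  then show ?thesis
    using assms by (simp add: sum.distrib mat_vec_def)
qed

lemma continuous_on_mat_vec: "continuous_on S (mat_vec V M)"
  unfolding mat_vec_def
proof (rule continuous_on_coordinatewise_then_product)
  fix i
  show "continuous_on S (\<lambda>x. \<Sum>j\<in>V. M i j * x j)"
    by (intro continuous_on_sum continuous_on_mult continuous_on_const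
        continuous_on_product_then_coordinatewise[OF continuous_on_id])
qed

lemma inner_on_mat_vec_sym:
  assumes "\<And>i j. i \<in> V \<Longrightarrow> j \<in> V \<Longrightarrow> M i j = M j i"
  shows "inner_on V x (mat_vec V M y) = inner_on V (mat_vec V M x) y"
proof -
  have "inner_on V x (mat_vec V M y) = (\<Sum>i\<in>V. \<Sum>j\<in>V. x i * M i j * y j)"
    unfolding inner_on_def mat_vec_def by (simp add: sum_distrib_left mult.assoc)
  also have "\<dots> = (\<Sum>j\<in>V. \<Sum>i\<in>V. x i * M i j * y j)"
    by (rule sum.swap)
  also have "\<dots> = inner_on V (mat_vec V M x) y"
    unfolding inner_on_def mat_vec_def
    by (auto simp: sum_distrib_right assms mult.commute mult.left_commute intro!: sum.cong)
      (simp add: sum_distrib_left assms mult.commute mult.left_commute)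
  finally show ?thesis .
qed

section \<open>Orthogonal projection and a dimension bound\<close>

lemma orthogonal_residual_exists:
  assumes "finite J" and fV: "finite V"
  shows "\<exists>c. \<forall>j\<in>J. inner_on V (\<lambda>i. x i - lincomb J c f i) (f j) = 0"
  using assms(1)
proof (induction J arbitrary: x rule: finite_induct)
  case empty
  then show ?case by simp
next
  case (insert j0 J)
  obtain cx where cx: "\<forall>j\<in>J. inner_on V (\<lambda>i. x i - lincomb J cx f i) (f j) = 0"
    using insert.IH by blast
  obtain cf where cf: "\<forall>j\<in>J. inner_on V (\<lambda>i. f j0 i - lincomb J cf f i) (f j) = 0"
    using insert.IH by blast
  define r where "r = (\<lambda>i. x i - lincomb J cx f i)"
  define g where "g = (\<lambda>i. f j0 i - lincomb J cf f i)"
  define \<alpha> where "\<alpha> = inner_on V r g / inner_on V g g"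
  define c where "c = (\<lambda>j. if j = j0 then \<alpha> else cx j - \<alpha> * cf j)"
  \<comment> \<open>Gram--Schmidt step: subtract from \<open>r\<close> its component along the new direction \<open>g\<close>.\<close>
  have residual: "(\<lambda>i. x i - lincomb (insert j0 J) c f i) = (\<lambda>i. r i - \<alpha> * g i)"
  proof
    fix i
    have "lincomb (insert j0 J) c f i = \<alpha> * f j0 i + (\<Sum>j\<in>J. c j * f j i)"
      unfolding lincomb_def using insert.hyps by (simp add: c_def)
    also have "(\<Sum>j\<in>J. c j * f j i) = (\<Sum>j\<in>J. cx j * f j i - \<alpha> * (cf j * f j i))"
      using insert.hyps by (auto simp: c_def algebra_simps intro!: sum.cong)
    also have "\<dots> = (\<Sum>j\<in>J. cx j * f j i) - \<alpha> * (\<Sum>j\<in>J. cf j * f j i)"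
      by (simp add: sum_subtractf sum_distrib_left)
    finally show "x i - lincomb (insert j0 J) c f i = r i - \<alpha> * g i"
      unfolding r_def g_def lincomb_def by (simp add: algebra_simps)
  qed
  have rJ: "\<forall>j\<in>J. inner_on V r (f j) = 0" and gJ: "\<forall>j\<in>J. inner_on V g (f j) = 0"
    using cx cf by (simp_all add: r_def g_def)
  have "inner_on V (\<lambda>i. r i - \<alpha> * g i) g = 0"
  proof (cases "inner_on V g g = 0")
    case True
    then have "\<forall>i\<in>V. g i = 0"
      using inner_on_self_eq_0[OF fV] by blast
    then show ?thesis
      by (simp add: inner_on_def)
  next
    case False
    then show ?thesis
      unfolding inner_on_diff_left inner_on_scale_left \<alpha>_def by simp
  qed
  moreover have "f j0 = (\<lambda>i. g i + lincomb J cf f i)"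
    unfolding g_def by simp
  ultimately have "inner_on V (\<lambda>i. r i - \<alpha> * g i) (f j0) = 0"
    using rJ gJ by (simp add: inner_on_add_right inner_on_lincomb_right inner_on_diff_left
        inner_on_scale_left)
  moreover have "\<forall>j\<in>J. inner_on V (\<lambda>i. r i - \<alpha> * g i) (f j) = 0"
    using rJ gJ by (simp add: inner_on_diff_left inner_on_scale_left)
  ultimately have "\<forall>j\<in>insert j0 J. inner_on V (\<lambda>i. x i - lincomb (insert j0 J) c f i) (f j) = 0"
    unfolding residual by blast
  then show ?case by blast
qed

lemma orthogonal_family_card_le:
  assumes fV: "finite V" and fT: "finite T"
    and pos: "\<And>t. t \<in> T \<Longrightarrow> inner_on V (g t) (g t) > 0"
    and orth: "\<And>s t. s \<in> T \<Longrightarrow> t \<in> T \<Longrightarrow> s \<noteq> t \<Longrightarrow> inner_on V (g s) (g t) = 0"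
  shows "card T \<le> card V"
proof -
  define h where "h t = (\<lambda>i. g t i / sqrt (inner_on V (g t) (g t)))" for t
  have orthonormal: "inner_on V (h s) (h t) = (if s = t then 1 else 0)" if "s \<in> T" "t \<in> T" for s t
  proof -
    have "inner_on V (h s) (h t)
        = inner_on V (g s) (g t) / (sqrt (inner_on V (g s) (g s)) * sqrt (inner_on V (g t) (g t)))"
      unfolding inner_on_def h_def by (simp add: sum_divide_distrib)
    then show ?thesis
      using pos[OF that(1)] pos[OF that(2)] orth[OF that] by (cases "s = t") (auto simp del: real_sqrt_mult)
  qed
  \<comment> \<open>Bessel's inequality for the coordinate vector \<open>e\<^sub>i\<close>.\<close>
  have bessel: "(\<Sum>t\<in>T. h t i * h t i) \<le> 1" if i: "i \<in> V" for i
  proof -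
    define a where "a t = h t i" for t
    define L where "L = lincomb T a h"
    have "inner_on V (unit_vec i) (h t) = a t" for t
      using inner_on_unit_vec[OF fV i, of "h t"] by (simp add: inner_on_commute a_def)
    then have xL: "inner_on V (unit_vec i) L = (\<Sum>t\<in>T. a t * a t)"
      unfolding L_def inner_on_lincomb_right by simp
    have LL: "inner_on V L L = (\<Sum>t\<in>T. a t * a t)"
    proof -
      have "inner_on V L L = (\<Sum>s\<in>T. a s * (\<Sum>t\<in>T. a t * inner_on V (h s) (h t)))"
        unfolding L_def inner_on_lincomb_left by (simp add: inner_on_lincomb_right)
      also have "\<dots> = (\<Sum>s\<in>T. a s * a s)"
      proof (rule sum.cong[OF refl])
        fix s assume s: "s \<in> T"
        have "(\<Sum>t\<in>T. a t * inner_on V (h s) (h t)) = (\<Sum>t\<in>T. if s = t then a t else 0)"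
          using orthonormal[OF s] by (intro sum.cong) auto
        then show "a s * (\<Sum>t\<in>T. a t * inner_on V (h s) (h t)) = a s * a s"
          using s fT by simp
      qed
      finally show ?thesis .
    qed
    have "0 \<le> inner_on V (\<lambda>j. unit_vec i j - L j) (\<lambda>j. unit_vec i j - L j)"
      by (rule inner_on_self_nonneg)
    also have "\<dots> = inner_on V (unit_vec i) (unit_vec i) - inner_on V (unit_vec i) L
        - (inner_on V L (unit_vec i) - inner_on V L L)"
      by (simp add: inner_on_diff_left inner_on_diff_right)
    also have "inner_on V (unit_vec i) (unit_vec i) = 1"
      using inner_on_unit_vec[OF fV i] by (simp add: unit_vec_def)
    also have "inner_on V L (unit_vec i) = inner_on V (unit_vec i) L"
      by (rule inner_on_commute)
    finally show ?thesis
      using xL LL by (simp add: a_def)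
  qed
  have "card T = (\<Sum>t\<in>T. inner_on V (h t) (h t))"
    using orthonormal by simp
  also have "\<dots> = (\<Sum>i\<in>V. \<Sum>t\<in>T. h t i * h t i)"
    unfolding inner_on_def by (rule sum.swap)
  also have "\<dots> \<le> (\<Sum>i\<in>V. 1)"
    by (intro sum_mono bessel)
  finally show ?thesis by simp
qed

section \<open>Krylov spaces\<close>

definition krylov_vec :: "'a set \<Rightarrow> ('a \<Rightarrow> 'a \<Rightarrow> real) \<Rightarrow> ('b \<Rightarrow> 'a \<Rightarrow> real) \<Rightarrow> 'b \<times> nat \<Rightarrow> 'a \<Rightarrow> real"
  where "krylov_vec V M b p = (mat_vec V M ^^ snd p) (b (fst p))"

definition krylov_span ::
    "'a set \<Rightarrow> ('a \<Rightarrow> 'a \<Rightarrow> real) \<Rightarrow> 'b set \<Rightarrow> ('b \<Rightarrow> 'a \<Rightarrow> real) \<Rightarrow> nat \<Rightarrow> ('a \<Rightarrow> real) \<Rightarrow> bool"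
  where "krylov_span V M I b m x \<longleftrightarrow>
    (\<exists>c. \<forall>i\<in>V. x i = lincomb (I \<times> {..<m}) c (krylov_vec V M b) i)"

lemma krylov_vec_Suc: "mat_vec V M (krylov_vec V M b (r, k)) = krylov_vec V M b (r, Suc k)"
  unfolding krylov_vec_def by simp

context
  fixes V :: "'a set" and M :: "'a \<Rightarrow> 'a \<Rightarrow> real" and I :: "'b set" and b :: "'b \<Rightarrow> 'a \<Rightarrow> real"
  assumes finite_V: "finite V" and finite_I: "finite I"
begin

lemma krylov_span_krylov_vec: "p \<in> I \<times> {..<m} \<Longrightarrow> krylov_span V M I b m (krylov_vec V M b p)"
  unfolding krylov_span_def lincomb_def
  using finite_I
  by (intro exI[of _ "\<lambda>q. if q = p then 1 else 0"]) (simp add: if_distrib[of "\<lambda>x. x * _"] cong: if_cong)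

lemma krylov_span_lincomb_krylov_vec: "krylov_span V M I b m (lincomb (I \<times> {..<m}) c (krylov_vec V M b))"
  unfolding krylov_span_def by blast

lemma krylov_span_cong: "krylov_span V M I b m x \<Longrightarrow> (\<And>i. i \<in> V \<Longrightarrow> x i = y i) \<Longrightarrow> krylov_span V M I b m y"
  unfolding krylov_span_def by auto

lemma krylov_span_lincomb:
  assumes "finite J" and "\<And>j. j \<in> J \<Longrightarrow> krylov_span V M I b m (g j)"
  shows "krylov_span V M I b m (lincomb J d g)"
proof -
  obtain C where C: "\<And>j i. j \<in> J \<Longrightarrow> i \<in> V \<Longrightarrow> g j i = lincomb (I \<times> {..<m}) (C j) (krylov_vec V M b) i"
    using assms(2) unfolding krylov_span_def by metis
  have "lincomb J d g i = lincomb (I \<times> {..<m}) (\<lambda>p. \<Sum>j\<in>J. d j * C j p) (krylov_vec V M b) i"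
    if "i \<in> V" for i
  proof -
    have "lincomb J d g i = (\<Sum>j\<in>J. d j * (\<Sum>p\<in>I \<times> {..<m}. C j p * krylov_vec V M b p i))"
      using C[OF _ that] by (auto simp: lincomb_def intro!: sum.cong)
    then show ?thesis
      by (simp add: lincomb_def sum_distrib_left sum_distrib_right sum.swap[of _ J] mult.assoc)
  qed
  then show ?thesis
    unfolding krylov_span_def by blast
qed

lemma krylov_span_diff:
  assumes "krylov_span V M I b m x" and "krylov_span V M I b m y"
  shows "krylov_span V M I b m (\<lambda>i. x i - y i)"
proof -
  obtain c1 c2 where "\<forall>i\<in>V. x i = lincomb (I \<times> {..<m}) c1 (krylov_vec V M b) i"
    and "\<forall>i\<in>V. y i = lincomb (I \<times> {..<m}) c2 (krylov_vec V M b) i"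
    using assms unfolding krylov_span_def by blast
  then show ?thesis
    unfolding krylov_span_def
    by (intro exI[of _ "\<lambda>j. c1 j - c2 j"]) (simp add: lincomb_def left_diff_distrib sum_subtractf)
qed

lemma krylov_span_mono:
  assumes "m \<le> m'" and "krylov_span V M I b m x"
  shows "krylov_span V M I b m' x"
proof -
  obtain c where c: "\<forall>i\<in>V. x i = lincomb (I \<times> {..<m}) c (krylov_vec V M b) i"
    using assms(2) unfolding krylov_span_def by blast
  show ?thesis
    unfolding krylov_span_def
  proof (intro exI ballI)
    fix i assume "i \<in> V"
    have "lincomb (I \<times> {..<m'}) (\<lambda>p. if snd p < m then c p else 0) (krylov_vec V M b) i
        = lincomb (I \<times> {..<m}) c (krylov_vec V M b) i"
      unfolding lincomb_def using assms(1) finite_I by (intro sum.mono_neutral_cong_right) auto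
    then show "x i = lincomb (I \<times> {..<m'}) (\<lambda>p. if snd p < m then c p else 0) (krylov_vec V M b) i"
      using c \<open>i \<in> V\<close> by simp
  qed
qed

lemma krylov_span_mat_vec:
  assumes "krylov_span V M I b m x"
  shows "krylov_span V M I b (Suc m) (mat_vec V M x)"
proof -
  obtain c where c: "\<forall>i\<in>V. x i = lincomb (I \<times> {..<m}) c (krylov_vec V M b) i"
    using assms unfolding krylov_span_def by blast
  have "mat_vec V M x = mat_vec V M (lincomb (I \<times> {..<m}) c (krylov_vec V M b))"
    using c by (intro mat_vec_cong) auto
  also have "\<dots> = lincomb (I \<times> {..<m}) c (\<lambda>p. mat_vec V M (krylov_vec V M b p))"
    by (rule mat_vec_lincomb)
  finally have Mx: "mat_vec V M x = lincomb (I \<times> {..<m}) c (\<lambda>p. mat_vec V M (krylov_vec V M b p))" .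
  have "krylov_span V M I b (Suc m) (lincomb (I \<times> {..<m}) c (\<lambda>p. mat_vec V M (krylov_vec V M b p)))"
  proof (rule krylov_span_lincomb)
    fix p assume "p \<in> I \<times> {..<m}"
    then show "krylov_span V M I b (Suc m) (mat_vec V M (krylov_vec V M b p))"
      using krylov_span_krylov_vec[of "(fst p, Suc (snd p))" "Suc m"] krylov_vec_Suc[of V M b "fst p" "snd p"]
      by auto
  qed (simp add: finite_I)
  then show ?thesis
    unfolding Mx .
qed

lemma krylov_span_Suc_reduce:
  assumes "\<forall>r\<in>I. krylov_span V M I b m (krylov_vec V M b (r, m))"
    and "krylov_span V M I b (Suc m) x"
  shows "krylov_span V M I b m x"
proof -
  obtain c where c: "\<forall>i\<in>V. x i = lincomb (I \<times> {..<Suc m}) c (krylov_vec V M b) i"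
    using assms(2) unfolding krylov_span_def by blast
  have "krylov_span V M I b m (lincomb (I \<times> {..<Suc m}) c (krylov_vec V M b))"
  proof (rule krylov_span_lincomb)
    fix p assume p: "p \<in> I \<times> {..<Suc m}"
    show "krylov_span V M I b m (krylov_vec V M b p)"
    proof (cases "snd p < m")
      case True
      then show ?thesis
        using p krylov_span_krylov_vec[of p m] by auto
    next
      case False
      then have "p = (fst p, m)"
        using p by auto
      then show ?thesis
        using p assms(1) by (metis mem_Sigma_iff)
    qed
  qed (simp add: finite_I)
  then show ?thesis
    using c krylov_span_cong by auto
qed

lemma krylov_span_stable:
  assumes "\<forall>r\<in>I. krylov_span V M I b m (krylov_vec V M b (r, m))" and "r \<in> I"
  shows "krylov_span V M I b m (krylov_vec V M b (r, k))"
proof (cases "k < m")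
  case True
  then show ?thesis
    using assms(2) krylov_span_krylov_vec by auto
next
  case False
  then obtain d where k: "k = m + d"
    using le_Suc_ex not_less by blast
  have "\<forall>r\<in>I. krylov_span V M I b m (krylov_vec V M b (r, m + d))"
  proof (induction d)
    case 0
    then show ?case using assms(1) by simp
  next
    case (Suc d)
    show ?case
    proof
      fix r assume "r \<in> I"
      then have "krylov_span V M I b (Suc m) (mat_vec V M (krylov_vec V M b (r, m + d)))"
        using Suc krylov_span_mat_vec by blast
      then have "krylov_span V M I b (Suc m) (krylov_vec V M b (r, m + Suc d))"
        by (simp add: krylov_vec_Suc)
      then show "krylov_span V M I b m (krylov_vec V M b (r, m + Suc d))"
        by (rule krylov_span_Suc_reduce[OF assms(1)])
    qed
  qed
  then show ?thesis
    using k assms(2) by blast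
qed

text \<open>Otherwise the residuals of \<open>M\<^sup>m b\<^sub>r\<close> orthogonal to the \<open>m\<close>-th Krylov space, for
  \<open>m = 0, \<dots>, card V\<close>, would be \<open>card V + 1\<close> pairwise orthogonal nonzero vectors.\<close>
lemma krylov_span_saturates: "\<exists>m\<le>card V. \<forall>r\<in>I. krylov_span V M I b m (krylov_vec V M b (r, m))"
proof (rule ccontr)
  assume "\<not> ?thesis"
  then have "\<forall>m. \<exists>r. m \<le> card V \<longrightarrow> r \<in> I \<and> \<not> krylov_span V M I b m (krylov_vec V M b (r, m))"
    by auto
  then obtain R where R: "\<And>m. m \<le> card V \<Longrightarrow> R m \<in> I \<and> \<not> krylov_span V M I b m (krylov_vec V M b (R m, m))"
    by metis
  have "\<forall>m. \<exists>c. \<forall>p\<in>I \<times> {..<m}.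
      inner_on V (\<lambda>i. krylov_vec V M b (R m, m) i - lincomb (I \<times> {..<m}) c (krylov_vec V M b) i)
        (krylov_vec V M b p) = 0"
    by (intro allI orthogonal_residual_exists[OF _ finite_V]) (simp add: finite_I)
  then obtain C where C: "\<And>m p. p \<in> I \<times> {..<m} \<Longrightarrow>
      inner_on V (\<lambda>i. krylov_vec V M b (R m, m) i - lincomb (I \<times> {..<m}) (C m) (krylov_vec V M b) i)
        (krylov_vec V M b p) = 0"
    by metis
  define g where "g m = (\<lambda>i. krylov_vec V M b (R m, m) i - lincomb (I \<times> {..<m}) (C m) (krylov_vec V M b) i)"
    for m
  have orth: "inner_on V (g m) y = 0" if y: "krylov_span V M I b m y" for m y
  proof -
    obtain c where "\<forall>i\<in>V. y i = lincomb (I \<times> {..<m}) c (krylov_vec V M b) i"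
      using y unfolding krylov_span_def by blast
    then have "inner_on V (g m) y = inner_on V (g m) (lincomb (I \<times> {..<m}) c (krylov_vec V M b))"
      by (intro inner_on_cong) auto
    then show ?thesis
      unfolding inner_on_lincomb_right using C g_def by simp
  qed
  have g_span: "krylov_span V M I b (Suc m) (g m)" if "m \<le> card V" for m
    unfolding g_def
    by (intro krylov_span_diff krylov_span_krylov_vec krylov_span_mono[OF _ krylov_span_lincomb_krylov_vec])
      (use R[OF that] in auto)
  have g_pos: "inner_on V (g m) (g m) > 0" if "m \<le> card V" for m
  proof -
    have "\<exists>i\<in>V. g m i \<noteq> 0"
    proof (rule ccontr)
      assume "\<not> ?thesis"
      then have "krylov_span V M I b m (krylov_vec V M b (R m, m))"
        unfolding krylov_span_def g_def by auto
      then show False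
        using R[OF that] by blast
    qed
    then show ?thesis
      using inner_on_self_pos[OF finite_V] by blast
  qed
  have "card {..card V} \<le> card V"
  proof (rule orthogonal_family_card_le[OF finite_V, of _ g])
    fix s t assume st: "s \<in> {..card V}" "t \<in> {..card V}" "s \<noteq> t"
    show "inner_on V (g s) (g t) = 0"
    proof (cases "s < t")
      case True
      then show ?thesis
        using orth[of t "g s"] g_span[of s] krylov_span_mono[of "Suc s" t] st
        by (simp add: inner_on_commute)
    next
      case False
      then show ?thesis
        using orth[of s "g t"] g_span[of t] krylov_span_mono[of "Suc t" s] st by simp
    qed
  qed (use g_pos in auto)
  then show False by simp
qed

lemma krylov_vec_in_krylov_span:
  assumes "r \<in> I"
  shows "krylov_span V M I b (card V) (krylov_vec V M b (r, k))"
proof -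
  obtain m where "m \<le> card V" and "\<forall>r\<in>I. krylov_span V M I b m (krylov_vec V M b (r, m))"
    using krylov_span_saturates by blast
  then show ?thesis
    using krylov_span_stable assms krylov_span_mono by blast
qed

end

section \<open>Eigenvectors of symmetric matrices\<close>

lemma compact_box:
  "compact (PiE UNIV (\<lambda>i. if i \<in> V then {-1..1::real} else {0}))"
proof -
  have "compactin (product_topology (\<lambda>i. euclidean) UNIV)
      (PiE UNIV (\<lambda>i. if i \<in> V then {-1..1::real} else {0}))"
    by (subst compactin_PiE) (auto simp: compactin_euclidean_iff)
  then show ?thesis
    by (simp add: euclidean_product_topology compactin_euclidean_iff)
qed

lemma compact_unit_vectors:
  fixes S :: "('a \<Rightarrow> real) set"
  assumes fV: "finite V" and "closed S" and vanish: "\<And>v i. v \<in> S \<Longrightarrow> i \<notin> V \<Longrightarrow> v i = 0"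
  shows "compact {v \<in> S. inner_on V v v = 1}"
proof -
  let ?C = "{v \<in> S. inner_on V v v = 1}"
  let ?B = "PiE UNIV (\<lambda>i. if i \<in> V then {-1..1::real} else {0})"
  have sub: "?C \<subseteq> ?B"
  proof
    fix v assume v: "v \<in> ?C"
    have "v i \<in> (if i \<in> V then {-1..1} else {0})" for i
    proof (cases "i \<in> V")
      case True
      have "(v i)\<^sup>2 \<le> inner_on V v v"
        unfolding inner_on_def power2_eq_square by (rule member_le_sum[OF True _ fV]) simp
      then have "\<bar>v i\<bar> \<le> 1"
        using v abs_square_le_1 by fastforce
      then show ?thesis
        using True by auto
    next
      case False
      then show ?thesis
        using v vanish by simp
    qed
    then show "v \<in> ?B"
      by (simp add: PiE_UNIV_domain Pi_iff)
  qed
  have "continuous_on UNIV (\<lambda>v. inner_on V v v)"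
    using continuous_on_inner_on[OF continuous_on_id continuous_on_id] .
  then have "closed (S \<inter> {v. inner_on V v v = 1})"
    using closed_Collect_eq[OF _ continuous_on_const] closed_Int \<open>closed S\<close> by blast
  moreover have "S \<inter> {v. inner_on V v v = 1} = ?C"
    by blast
  ultimately have "compact (?B \<inter> ?C)"
    using compact_Int_closed[OF compact_box] by simp
  then show ?thesis
    unfolding Int_absorb1[OF sub] .
qed

lemma inner_on_normalized:
  assumes "inner_on V x x > 0"
  shows "inner_on V (\<lambda>i. inverse (sqrt (inner_on V x x)) * x i) (\<lambda>i. inverse (sqrt (inner_on V x x)) * x i) = 1"
proof -
  have "inverse (sqrt (inner_on V x x)) * inverse (sqrt (inner_on V x x)) * inner_on V x x = 1"
    using assms by (simp add: field_simps flip: power2_eq_square)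
  then show ?thesis
    by (simp add: inner_on_scale_left inner_on_scale_right mult.assoc)
qed

lemma rayleigh_quotient_maximum:
  fixes P :: "('a \<Rightarrow> real) \<Rightarrow> bool"
  assumes fV: "finite V"
    and vanish: "\<And>v i. P v \<Longrightarrow> i \<notin> V \<Longrightarrow> v i = 0"
    and scale: "\<And>a v. P v \<Longrightarrow> P (\<lambda>i. a * v i)"
    and closed: "closed {v. P v}"
    and u: "P u" "i0 \<in> V" "u i0 \<noteq> 0"
  obtains v where "P v" and "inner_on V v v = 1"
    and "\<And>z. P z \<Longrightarrow> inner_on V z (mat_vec V M z) \<le> inner_on V v (mat_vec V M v) * inner_on V z z"
proof -
  define q where "q z = inner_on V z (mat_vec V M z)" for z
  define C where "C = {v \<in> {v. P v}. inner_on V v v = 1}"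
  have "compact C"
    unfolding C_def using compact_unit_vectors[OF fV closed] vanish by blast
  moreover have "inner_on V u u > 0"
    using inner_on_self_pos[OF fV] u by blast
  then have "(\<lambda>i. inverse (sqrt (inner_on V u u)) * u i) \<in> C"
    unfolding C_def using inner_on_normalized scale u(1) by auto
  then have "C \<noteq> {}" by auto
  moreover have "continuous_on C q"
    unfolding q_def by (intro continuous_on_inner_on continuous_on_id continuous_on_mat_vec)
  ultimately obtain v where v: "v \<in> C" and v_max: "\<And>z. z \<in> C \<Longrightarrow> q z \<le> q v"
    using continuous_attains_sup by metis
  have "q z \<le> q v * inner_on V z z" if "P z" for z
  proof (cases "inner_on V z z = 0")
    case True
    then have "\<forall>i\<in>V. z i = 0"
      using inner_on_self_eq_0[OF fV] by blast
    then show ?thesis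
      using True by (simp add: q_def inner_on_def)
  next
    case False
    then have pos: "inner_on V z z > 0"
      using inner_on_self_nonneg[of V z] by linarith
    define a where "a = inverse (sqrt (inner_on V z z))"
    have "(\<lambda>i. a * z i) \<in> C"
      unfolding C_def a_def using inner_on_normalized[OF pos] scale \<open>P z\<close> by auto
    then have "q (\<lambda>i. a * z i) \<le> q v"
      by (rule v_max)
    moreover have "q (\<lambda>i. a * z i) = a * a * q z"
      by (simp add: q_def mat_vec_scale inner_on_scale_left inner_on_scale_right)
    moreover have "a * a = inverse (inner_on V z z)"
      using pos by (simp add: a_def flip: inverse_mult_distrib)
    ultimately show ?thesis
      using pos by (simp add: field_simps)
  qed
  then show ?thesis
    using that v unfolding C_def q_def by blast
qed

text \<open>The variational characterisation of the top eigenvalue: perturbing the maximiser \<open>v\<close> by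
  \<open>\<epsilon> w\<close>, where \<open>w = M v - \<lambda> v\<close> is orthogonal to \<open>v\<close>, increases the Rayleigh quotient
  to first order by \<open>2 \<epsilon> \<parallel>w\<parallel>\<^sup>2\<close>, so \<open>w\<close> must vanish.\<close>
lemma rayleigh_maximizer_is_eigenvector:
  fixes P :: "('a \<Rightarrow> real) \<Rightarrow> bool"
  assumes fV: "finite V" and sym: "\<And>i j. i \<in> V \<Longrightarrow> j \<in> V \<Longrightarrow> M i j = M j i"
    and add: "\<And>v w. P v \<Longrightarrow> P w \<Longrightarrow> P (\<lambda>i. v i + w i)"
    and scale: "\<And>a v. P v \<Longrightarrow> P (\<lambda>i. a * v i)"
    and invariant: "\<And>v. P v \<Longrightarrow> P (\<lambda>i. if i \<in> V then mat_vec V M v i else 0)"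
    and v: "P v" "inner_on V v v = 1"
    and v_max: "\<And>z. P z \<Longrightarrow> inner_on V z (mat_vec V M z) \<le> inner_on V v (mat_vec V M v) * inner_on V z z"
  shows "\<forall>i\<in>V. mat_vec V M v i = inner_on V v (mat_vec V M v) * v i"
proof -
  define q where "q z = inner_on V z (mat_vec V M z)" for z
  define \<mu> where "\<mu> = q v"
  define w where "w = (\<lambda>i. (if i \<in> V then mat_vec V M v i else 0) + (- \<mu>) * v i)"
  have Pw: "P w"
    unfolding w_def by (intro add scale invariant v)
  have w_V: "w i = mat_vec V M v i - \<mu> * v i" if "i \<in> V" for i
    using that by (simp add: w_def)
  have vw: "inner_on V v w = 0"
  proof -
    have "inner_on V v w = inner_on V v (\<lambda>i. mat_vec V M v i - \<mu> * v i)"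
      by (rule inner_on_cong) (auto simp: w_V)
    then show ?thesis
      using v(2) by (simp add: inner_on_diff_right inner_on_scale_right q_def \<mu>_def)
  qed
  have "\<forall>i\<in>V. w i = 0"
  proof (rule ccontr)
    assume "\<not> ?thesis"
    then have s_pos: "inner_on V w w > 0"
      using inner_on_self_pos[OF fV] by blast
    define s where "s = inner_on V w w"
    have wMv: "inner_on V w (mat_vec V M v) = s"
    proof -
      have "inner_on V w (mat_vec V M v) = inner_on V w (\<lambda>i. w i + \<mu> * v i)"
        by (rule inner_on_cong) (auto simp: w_V)
      then show ?thesis
        using vw by (simp add: inner_on_add_right inner_on_scale_right inner_on_commute[of V w v] s_def)
    qed
    have vMw: "inner_on V v (mat_vec V M w) = s"
      using wMv inner_on_mat_vec_sym[of V M v w, OF sym] by (simp add: inner_on_commute[of V w])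
    define K where "K = \<bar>q w - \<mu> * s\<bar> + 1"
    define \<epsilon> where "\<epsilon> = s / K"
    have K_pos: "K > 0" and \<epsilon>_pos: "\<epsilon> > 0"
      using s_pos by (simp_all add: K_def \<epsilon>_def s_def)
    define z where "z = (\<lambda>i. v i + \<epsilon> * w i)"
    have "inner_on V z z = 1 + \<epsilon> * \<epsilon> * s"
      unfolding z_def using v(2) vw
      by (simp add: inner_on_add_left inner_on_add_right inner_on_scale_left inner_on_scale_right
          inner_on_commute[of V w v] s_def)
    moreover have "q z = \<mu> + 2 * \<epsilon> * s + \<epsilon> * \<epsilon> * q w"
      unfolding z_def q_def mat_vec_add_scale using wMv vMw
      by (simp add: inner_on_add_left inner_on_add_right inner_on_scale_left inner_on_scale_right
          algebra_simps q_def \<mu>_def)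
    moreover have "q z \<le> \<mu> * inner_on V z z"
      using v_max[of z] scale add v(1) Pw by (simp add: z_def q_def \<mu>_def)
    ultimately have "\<epsilon> * (2 * s) \<le> \<epsilon> * (\<epsilon> * (\<mu> * s - q w))"
      by (simp add: algebra_simps)
    then have "2 * s \<le> \<epsilon> * (\<mu> * s - q w)"
      using \<epsilon>_pos by simp
    also have "\<dots> < \<epsilon> * K"
      using \<epsilon>_pos unfolding K_def by (intro mult_strict_left_mono) auto
    also have "\<epsilon> * K = s"
      using K_pos by (simp add: \<epsilon>_def)
    finally show False
      using s_pos s_def by simp
  qed
  then show ?thesis
    using w_V by (simp add: q_def \<mu>_def)
qed

lemma invariant_subspace_has_eigenvector:
  fixes P :: "('a \<Rightarrow> real) \<Rightarrow> bool"
  assumes fV: "finite V" and sym: "\<And>i j. i \<in> V \<Longrightarrow> j \<in> V \<Longrightarrow> M i j = M j i"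
    and vanish: "\<And>v i. P v \<Longrightarrow> i \<notin> V \<Longrightarrow> v i = 0"
    and add: "\<And>v w. P v \<Longrightarrow> P w \<Longrightarrow> P (\<lambda>i. v i + w i)"
    and scale: "\<And>a v. P v \<Longrightarrow> P (\<lambda>i. a * v i)"
    and invariant: "\<And>v. P v \<Longrightarrow> P (\<lambda>i. if i \<in> V then mat_vec V M v i else 0)"
    and closed: "closed {v. P v}"
    and u: "P u" "i0 \<in> V" "u i0 \<noteq> 0"
  obtains w \<mu> where "P w" and "\<exists>i\<in>V. w i \<noteq> 0" and "\<forall>i\<in>V. mat_vec V M w i = \<mu> * w i"
proof -
  obtain v where v: "P v" "inner_on V v v = 1"
    and v_max: "\<And>z. P z \<Longrightarrow> inner_on V z (mat_vec V M z) \<le> inner_on V v (mat_vec V M v) * inner_on V z z"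
  proof (rule rayleigh_quotient_maximum[of V P u i0 M])
    show "\<And>v i. P v \<Longrightarrow> i \<notin> V \<Longrightarrow> v i = 0"
      by (fact vanish)
  qed (use fV scale closed u that in blast)+
  have "\<exists>i\<in>V. v i \<noteq> 0"
  proof (rule ccontr)
    assume "\<not> ?thesis"
    then have "inner_on V v v = 0"
      by (simp add: inner_on_def)
    then show False
      using v(2) by simp
  qed
  then show ?thesis
    using that v(1) rayleigh_maximizer_is_eigenvector[OF fV sym add scale invariant v v_max] by blast
qed

section \<open>Controllability of symmetric systems\<close>

lemma controllable_if_no_orthogonal_vector:
  assumes fV: "finite V" and fI: "finite I"
    and orth: "\<And>v. \<forall>r\<in>I. \<forall>k. inner_on V v ((mat_vec V M ^^ k) (unit_vec (att r))) = 0 \<Longrightarrow>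
      \<forall>i\<in>V. v i = 0"
  shows "controllable V M I att"
  unfolding controllable_def
proof
  fix x :: "'a \<Rightarrow> real"
  define F where "F = krylov_vec V M (\<lambda>r. unit_vec (att r))"
  define n where "n = card V"
  have "finite (I \<times> {..<n})"
    using fI by simp
  then obtain c where c: "\<forall>p\<in>I \<times> {..<n}. inner_on V (\<lambda>i. x i - lincomb (I \<times> {..<n}) c F i) (F p) = 0"
    using orthogonal_residual_exists[OF _ fV] by blast
  define w where "w = (\<lambda>i. x i - lincomb (I \<times> {..<n}) c F i)"
  have "\<forall>r\<in>I. \<forall>k. inner_on V w ((mat_vec V M ^^ k) (unit_vec (att r))) = 0"
  proof (intro ballI allI)
    fix r k assume "r \<in> I"
    then have "krylov_span V M I (\<lambda>r. unit_vec (att r)) n (F (r, k))"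
      unfolding F_def n_def by (rule krylov_vec_in_krylov_span[OF fV fI])
    then obtain d where d: "\<forall>i\<in>V. F (r, k) i = lincomb (I \<times> {..<n}) d F i"
      unfolding krylov_span_def F_def by blast
    have "inner_on V w (F (r, k)) = inner_on V w (lincomb (I \<times> {..<n}) d F)"
      using d by (intro inner_on_cong) auto
    also have "\<dots> = 0"
      unfolding inner_on_lincomb_right using c w_def by (intro sum.neutral) auto
    finally show "inner_on V w ((mat_vec V M ^^ k) (unit_vec (att r))) = 0"
      by (simp add: F_def krylov_vec_def)
  qed
  then have "\<forall>i\<in>V. w i = 0"
    by (rule orth)
  then have "\<forall>i\<in>V. x i = lincomb (I \<times> {..<n}) c F i"
    by (simp add: w_def)
  then show "\<exists>c. \<forall>i\<in>V. x i = (\<Sum>r\<in>I. \<Sum>k<card V. c r k * ((mat_vec V M ^^ k) (unit_vec (att r))) i)"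
    by (intro exI[of _ "\<lambda>r k. c (r, k)"])
      (simp add: lincomb_def sum.cartesian_product n_def F_def krylov_vec_def case_prod_unfold)
qed

lemma eigenvector_zero_if_controllable:
  assumes fV: "finite V" and sym: "\<And>i j. i \<in> V \<Longrightarrow> j \<in> V \<Longrightarrow> M i j = M j i"
    and ctrl: "controllable V M I att" and att: "att ` I \<subseteq> V"
    and w0: "\<forall>r\<in>I. w (att r) = 0"
    and eig: "\<forall>i\<in>V. mat_vec V M w i = \<mu> * w i"
  shows "\<forall>i\<in>V. w i = 0"
proof -
  define F where "F r k = (mat_vec V M ^^ k) (unit_vec (att r))" for r k
  have powers: "inner_on V w ((mat_vec V M ^^ k) e) = \<mu> ^ k * inner_on V w e" for k e
  proof (induction k)
    case 0
    then show ?case by simp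
  next
    case (Suc k)
    have "inner_on V w ((mat_vec V M ^^ Suc k) e) = inner_on V (mat_vec V M w) ((mat_vec V M ^^ k) e)"
      using inner_on_mat_vec_sym[of V M, OF sym] by simp
    also have "\<dots> = inner_on V (\<lambda>i. \<mu> * w i) ((mat_vec V M ^^ k) e)"
      using eig by (intro inner_on_cong) auto
    finally show ?case
      using Suc by (simp add: inner_on_scale_left)
  qed
  have orth: "inner_on V w (F r k) = 0" if "r \<in> I" for r k
    using powers[of k] inner_on_unit_vec[OF fV] w0 att that by (auto simp: F_def)
  obtain c where c: "\<forall>i\<in>V. w i = (\<Sum>r\<in>I. \<Sum>k<card V. c r k * F r k i)"
    using ctrl unfolding controllable_def F_def by blast
  have "inner_on V w w = (\<Sum>i\<in>V. \<Sum>r\<in>I. \<Sum>k<card V. c r k * (w i * F r k i))"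
    unfolding inner_on_def using c by (intro sum.cong) (auto simp: sum_distrib_left mult.left_commute)
  also have "\<dots> = (\<Sum>r\<in>I. \<Sum>k<card V. \<Sum>i\<in>V. c r k * (w i * F r k i))"
    by (subst sum.swap) (intro sum.cong refl sum.swap)
  also have "\<dots> = (\<Sum>r\<in>I. \<Sum>k<card V. c r k * inner_on V w (F r k))"
    by (simp add: inner_on_def sum_distrib_left)
  also have "\<dots> = 0"
    using orth by simp
  finally show ?thesis
    using inner_on_self_eq_0[OF fV] by blast
qed

text \<open>Popov--Belevitch--Hautus test for symmetric \<open>M\<close>: the orthogonal complement of the
  reachable space is \<open>M\<close>-invariant, so if it is nontrivial it contains an eigenvector, and that
  eigenvector vanishes at every input node.\<close>
lemma controllable_if_eigenvectors_observable:
  assumes fV: "finite V" and fI: "finite I" and att: "att ` I \<subseteq> V"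
    and sym: "\<And>i j. i \<in> V \<Longrightarrow> j \<in> V \<Longrightarrow> M i j = M j i"
    and observable: "\<And>w \<mu>. \<forall>r\<in>I. w (att r) = 0 \<Longrightarrow> \<forall>i\<in>V. mat_vec V M w i = \<mu> * w i \<Longrightarrow>
      \<forall>i\<in>V. w i = 0"
  shows "controllable V M I att"
proof (rule controllable_if_no_orthogonal_vector[OF fV fI])
  fix v
  assume v: "\<forall>r\<in>I. \<forall>k. inner_on V v ((mat_vec V M ^^ k) (unit_vec (att r))) = 0"
  show "\<forall>i\<in>V. v i = 0"
  proof (rule ccontr)
    assume "\<not> ?thesis"
    then obtain i0 where i0: "i0 \<in> V" "v i0 \<noteq> 0"
      by auto
    define P where "P z \<longleftrightarrow> (\<forall>i. i \<notin> V \<longrightarrow> z i = 0) \<and>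
      (\<forall>r\<in>I. \<forall>k. inner_on V z ((mat_vec V M ^^ k) (unit_vec (att r))) = 0)" for z
    define u where "u = (\<lambda>i. if i \<in> V then v i else 0)"
    have Pu: "P u"
    proof -
      have "inner_on V u e = inner_on V v e" for e
        by (rule inner_on_cong) (simp_all add: u_def)
      then show ?thesis
        using v by (simp add: P_def u_def)
    qed
    have invariant: "P (\<lambda>i. if i \<in> V then mat_vec V M z i else 0)" if z: "P z" for z
    proof -
      have shift: "inner_on V (\<lambda>i. if i \<in> V then mat_vec V M z i else 0) ((mat_vec V M ^^ k) e)
          = inner_on V z ((mat_vec V M ^^ Suc k) e)" for k e
      proof -
        have "inner_on V (\<lambda>i. if i \<in> V then mat_vec V M z i else 0) ((mat_vec V M ^^ k) e)
            = inner_on V (mat_vec V M z) ((mat_vec V M ^^ k) e)"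
          by (rule inner_on_cong) simp_all
        also have "\<dots> = inner_on V z ((mat_vec V M ^^ Suc k) e)"
          using inner_on_mat_vec_sym[of V M, OF sym] by simp
        finally show ?thesis .
      qed
      have "inner_on V (\<lambda>i. if i \<in> V then mat_vec V M z i else 0) ((mat_vec V M ^^ k) (unit_vec (att r))) = 0"
        if "r \<in> I" for r k
        using shift[of k "unit_vec (att r)"] that z unfolding P_def by metis
      then show ?thesis
        by (simp add: P_def)
    qed
    have "{z. P z} = (\<Inter>i\<in>-V. {z. z i = 0}) \<inter>
        (\<Inter>r\<in>I. \<Inter>k. {z. inner_on V z ((mat_vec V M ^^ k) (unit_vec (att r))) = 0})"
      unfolding P_def by auto
    moreover have "closed \<dots>"
      by (intro closed_Int closed_INT ballI closed_Collect_eq continuous_on_const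
          continuous_on_product_coordinates continuous_on_inner_on[OF continuous_on_id continuous_on_const])
    ultimately have closed: "closed {z. P z}"
      by simp
    obtain w \<mu> where w: "P w" "\<exists>i\<in>V. w i \<noteq> 0" "\<forall>i\<in>V. mat_vec V M w i = \<mu> * w i"
    proof (rule invariant_subspace_has_eigenvector[of V M P u i0])
      show "\<And>z i. P z \<Longrightarrow> i \<notin> V \<Longrightarrow> z i = 0"
        by (simp add: P_def)
      show "\<And>z y. P z \<Longrightarrow> P y \<Longrightarrow> P (\<lambda>i. z i + y i)"
        by (simp add: P_def inner_on_add_left)
      show "\<And>a z. P z \<Longrightarrow> P (\<lambda>i. a * z i)"
        by (simp add: P_def inner_on_scale_left)
    qed (use fV sym invariant closed Pu i0 that in \<open>auto simp: u_def\<close>)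
    have "w (att r) = 0" if "r \<in> I" for r
    proof -
      have "inner_on V w ((mat_vec V M ^^ 0) (unit_vec (att r))) = 0"
        using w(1) that unfolding P_def by blast
      then show ?thesis
        using that att inner_on_unit_vec[OF fV, of "att r" w] by auto
    qed
    then show False
      using observable[of w \<mu>] w by blast
  qed
qed

definition offdiag_pattern :: "'a set \<Rightarrow> ('a \<Rightarrow> 'a \<Rightarrow> bool) \<Rightarrow> ('a \<Rightarrow> 'a \<Rightarrow> real) \<Rightarrow> bool" where
  "offdiag_pattern V E M \<longleftrightarrow> (\<forall>i\<in>V. \<forall>j\<in>V. M i j = M j i) \<and>
     (\<forall>i\<in>V. \<forall>j\<in>V. i \<noteq> j \<longrightarrow> (E i j \<longrightarrow> M i j > 0) \<and> (\<not> E i j \<longrightarrow> M i j = 0))"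

lemma in_Q_imp_offdiag_pattern: "in_Q V E M \<Longrightarrow> offdiag_pattern V E M"
  unfolding in_Q_def offdiag_pattern_def by (elim conjE) (intro conjI; assumption)

lemma offdiag_pattern_restrict:
  assumes "offdiag_pattern V E M" and "W \<subseteq> V" and "\<And>i j. i \<in> W \<Longrightarrow> j \<in> W \<Longrightarrow> E' i j \<longleftrightarrow> E i j"
  shows "offdiag_pattern W E' M"
  using assms by (auto simp: offdiag_pattern_def subset_iff)

lemma in_Q_diagonal_shift:
  assumes "state_graph V E" and pat: "offdiag_pattern V E M"
  shows "\<exists>c. in_Q V E (\<lambda>i j. if i = j then D i - c else M i j)"
proof -
  have fV: "finite V" and irrefl: "\<And>i j. E i j \<Longrightarrow> i \<noteq> j"
    using assms(1) unfolding state_graph_def by auto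
  define S where "S i = (\<Sum>j\<in>{j\<in>V. E i j}. M i j)" for i
  define c where "c = 1 + (\<Sum>i\<in>V. \<bar>D i + S i\<bar>)"
  have S_shift: "(\<Sum>j\<in>{j\<in>V. E i j}. if i = j then D i - c else M i j) = S i" for i
    unfolding S_def using irrefl by (intro sum.cong) auto
  have neg: "D i - c + S i < 0" if "i \<in> V" for i
    using member_le_sum[OF that, of "\<lambda>i. \<bar>D i + S i\<bar>"] fV by (simp add: c_def)
  have "in_Q V E (\<lambda>i j. if i = j then D i - c else M i j)"
    unfolding in_Q_def
  proof (intro conjI ballI)
    fix i assume i: "i \<in> V"
    show "\<exists>a<0. (if i = i then D i - c else M i i)
        = - (\<Sum>j\<in>{j\<in>V. E i j}. if i = j then D i - c else M i j) + a"
      using neg[OF i] by (intro exI[of _ "D i - c + S i"]) (simp add: S_shift)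
  qed (use pat in \<open>simp_all add: offdiag_pattern_def\<close>)
  then show ?thesis ..
qed

lemma SSC_eigenvector_zero:
  assumes net: "network V E I att" and ssc: "SSC V E I att" and pat: "offdiag_pattern V E M"
    and w0: "\<forall>r\<in>I. w (att r) = 0"
    and eig: "\<forall>i\<in>V. mat_vec V M w i + d i * w i = \<mu> * w i"
  shows "\<forall>i\<in>V. w i = 0"
proof -
  have fV: "finite V" and att: "att ` I \<subseteq> V" and sg: "state_graph V E"
    using net unfolding network_def state_graph_def by auto
  obtain c where Q: "in_Q V E (\<lambda>i j. if i = j then M i i + d i - c else M i j)"
    using in_Q_diagonal_shift[OF sg pat, of "\<lambda>i. M i i + d i"] by blast
  let ?M = "\<lambda>i j. if i = j then M i i + d i - c else M i j"
  have ctrl: "controllable V ?M I att"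
    using ssc Q unfolding SSC_def by blast
  have eig': "\<forall>i\<in>V. mat_vec V ?M w i = (\<mu> - c) * w i"
    using eig by (simp add: mat_vec_diag_update[OF fV] algebra_simps)
  show ?thesis
  proof (rule eigenvector_zero_if_controllable[where M = ?M])
    show "\<And>i j. i \<in> V \<Longrightarrow> j \<in> V \<Longrightarrow> ?M i j = ?M j i"
      using Q unfolding in_Q_def by blast
  qed (rule fV ctrl att w0 eig')+
qed

lemma SSC_defect_eigenvector_zero:
  assumes net: "network V E I att" and ssc: "SSC V E I att" and pat: "offdiag_pattern V E M"
    and w0: "\<forall>r\<in>I. w (att r) = 0"
    and eig: "\<forall>i\<in>V. mat_vec V M w i + (if i = k then s else 0) = \<mu> * w i"
    and defect: "w k \<noteq> 0 \<or> s = 0"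
  shows "\<forall>i\<in>V. w i = 0"
proof (rule SSC_eigenvector_zero[OF net ssc pat w0])
  show "\<forall>i\<in>V. mat_vec V M w i + (if i = k then s / w k else 0) * w i = \<mu> * w i"
    using eig defect by auto
qed

section \<open>Joining two networks by a bridge edge\<close>

definition bridged :: "('a \<Rightarrow> 'a \<Rightarrow> bool) \<Rightarrow> ('a \<Rightarrow> 'a \<Rightarrow> bool) \<Rightarrow> 'a \<Rightarrow> 'a \<Rightarrow> 'a \<Rightarrow> 'a \<Rightarrow> bool" where
  "bridged Ei Ej k l a b \<longleftrightarrow> Ei a b \<or> Ej a b \<or> (a = k \<and> b = l) \<or> (a = l \<and> b = k)"

lemma mat_vec_Un_single_cross:
  assumes "finite A" and "finite B" and "A \<inter> B = {}" and "b \<in> B"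
    and cross: "\<And>j. j \<in> B \<Longrightarrow> M i j = (if i = a \<and> j = b then M a b else 0)"
  shows "mat_vec (A \<union> B) M w i = mat_vec A M w i + (if i = a then M a b * w b else 0)"
proof -
  have "mat_vec (A \<union> B) M w i = mat_vec A M w i + (\<Sum>j\<in>B. M i j * w j)"
    unfolding mat_vec_def by (rule sum.union_disjoint[OF assms(1-3)])
  also have "(\<Sum>j\<in>B. M i j * w j) = (\<Sum>j\<in>B. if j = b then (if i = a then M a b * w b else 0) else 0)"
  proof (rule sum.cong[OF refl])
    fix j assume j: "j \<in> B"
    show "M i j * w j = (if j = b then (if i = a then M a b * w b else 0) else 0)"
    proof (cases "i = a \<and> j = b")
      case False
      have "M i j = 0"
        using cross[OF j] by (simp only: if_not_P[OF False])
      then show ?thesis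
        using False by auto
    qed auto
  qed
  also have "\<dots> = (if i = a then M a b * w b else 0)"
    using assms(2,4) by simp
  finally show ?thesis .
qed

lemma bridged_eigenvector_zero:
  assumes netI: "network Vi Ei Ii att" and netJ: "network Vj Ej Ij att" and disj: "Vi \<inter> Vj = {}"
    and sscI: "SSC Vi Ei Ii att" and sscJ: "SSC Vj Ej Ij att"
    and k: "k \<in> Vi" and l: "l \<in> Vj"
    and pat: "offdiag_pattern (Vi \<union> Vj) (bridged Ei Ej k l) M"
    and w0: "\<forall>r\<in>Ii \<union> Ij. w (att r) = 0"
    and eig: "\<forall>i\<in>Vi \<union> Vj. mat_vec (Vi \<union> Vj) M w i = \<mu> * w i"
  shows "\<forall>i\<in>Vi \<union> Vj. w i = 0"
proof -
  have fVi: "finite Vi" and EiV: "\<And>a b. Ei a b \<Longrightarrow> a \<in> Vi \<and> b \<in> Vi"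
    using netI unfolding network_def state_graph_def by auto
  have fVj: "finite Vj" and EjV: "\<And>a b. Ej a b \<Longrightarrow> a \<in> Vj \<and> b \<in> Vj"
    using netJ unfolding network_def state_graph_def by auto
  have patI: "offdiag_pattern Vi Ei M"
    by (rule offdiag_pattern_restrict[OF pat]) (use EjV disj k l in \<open>auto simp: bridged_def\<close>)
  have patJ: "offdiag_pattern Vj Ej M"
    by (rule offdiag_pattern_restrict[OF pat]) (use EiV disj k l in \<open>auto simp: bridged_def\<close>)
  have crossI: "M i j = (if i = k \<and> j = l then M k l else 0)" if "i \<in> Vi" "j \<in> Vj" for i j
  proof (cases "i = k \<and> j = l")
    case False
    then have "\<not> bridged Ei Ej k l i j" and "i \<noteq> j"
      using that disj EiV EjV k l by (auto simp: bridged_def)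
    then show ?thesis
      using pat that False by (auto simp: offdiag_pattern_def)
  qed simp
  have crossJ: "M i j = (if i = l \<and> j = k then M l k else 0)" if "i \<in> Vj" "j \<in> Vi" for i j
  proof (cases "i = l \<and> j = k")
    case False
    then have not_kl: "\<not> (j = k \<and> i = l)"
      by blast
    have "M i j = M j i"
      using pat that unfolding offdiag_pattern_def by blast
    also have "\<dots> = 0"
      using crossI[OF that(2,1)] not_kl by (simp only: if_False)
    finally show ?thesis
      by (simp only: if_not_P[OF False])
  qed simp
  have rowI: "\<forall>i\<in>Vi. mat_vec Vi M w i + (if i = k then M k l * w l else 0) = \<mu> * w i"
  proof
    fix i assume i: "i \<in> Vi"
    have "mat_vec (Vi \<union> Vj) M w i = mat_vec Vi M w i + (if i = k then M k l * w l else 0)"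
      by (rule mat_vec_Un_single_cross[OF fVi fVj disj l]) (rule crossI[OF i])
    then show "mat_vec Vi M w i + (if i = k then M k l * w l else 0) = \<mu> * w i"
      using eig i by simp
  qed
  have rowJ: "\<forall>i\<in>Vj. mat_vec Vj M w i + (if i = l then M l k * w k else 0) = \<mu> * w i"
  proof
    fix i assume i: "i \<in> Vj"
    have "mat_vec (Vj \<union> Vi) M w i = mat_vec Vj M w i + (if i = l then M l k * w k else 0)"
      using disj by (intro mat_vec_Un_single_cross[OF fVj fVi _ k] crossJ[OF i]) blast+
    then show "mat_vec Vj M w i + (if i = l then M l k * w k else 0) = \<mu> * w i"
      using eig i by (simp add: Un_commute)
  qed
  have w0I: "\<forall>r\<in>Ii. w (att r) = 0" and w0J: "\<forall>r\<in>Ij. w (att r) = 0"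
    using w0 by auto
  have defect_I: "\<forall>i\<in>Vi. w i = 0" if "w k \<noteq> 0 \<or> M k l * w l = 0"
    by (rule SSC_defect_eigenvector_zero[OF netI sscI patI w0I rowI that])
  have defect_J: "\<forall>i\<in>Vj. w i = 0" if "w l \<noteq> 0 \<or> M l k * w k = 0"
    by (rule SSC_defect_eigenvector_zero[OF netJ sscJ patJ w0J rowJ that])
  have "w k = 0"
  proof (rule ccontr)
    assume "w k \<noteq> 0"
    then have "\<forall>i\<in>Vi. w i = 0"
      by (intro defect_I) simp
    then have "w k = 0"
      using k by simp
    with \<open>w k \<noteq> 0\<close> show False
      by contradiction
  qed
  then have zero_J: "\<forall>i\<in>Vj. w i = 0"
    by (intro defect_J) simp
  then have "w l = 0"
    using l by simp
  then have "\<forall>i\<in>Vi. w i = 0"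
    by (intro defect_I) simp
  then show ?thesis
    using zero_J by (simp add: ball_Un)
qed

theorem corollary2:
  fixes Vi Vj :: "'a set" and Ei Ej :: "'a \<Rightarrow> 'a \<Rightarrow> bool"
    and Ii Ij :: "'b set" and att :: "'b \<Rightarrow> 'a" and k l :: 'a
  assumes "network Vi Ei Ii att" and "network Vj Ej Ij att"
    and "Vi \<inter> Vj = {}" and "Ii \<inter> Ij = {}"
    and "SSC Vi Ei Ii att" and "SSC Vj Ej Ij att"
    and "k \<in> Vi" and "l \<in> Vj"
  shows "SSC (Vi \<union> Vj)
             (\<lambda>a b. Ei a b \<or> Ej a b \<or> (a = k \<and> b = l) \<or> (a = l \<and> b = k))
             (Ii \<union> Ij) att"
proof -
  have fV: "finite (Vi \<union> Vj)" and fI: "finite (Ii \<union> Ij)" and att: "att ` (Ii \<union> Ij) \<subseteq> Vi \<union> Vj"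
    using assms(1,2) unfolding network_def state_graph_def by auto
  have "SSC (Vi \<union> Vj) (bridged Ei Ej k l) (Ii \<union> Ij) att"
    unfolding SSC_def
  proof (intro allI impI)
    fix M assume "in_Q (Vi \<union> Vj) (bridged Ei Ej k l) M"
    then have pat: "offdiag_pattern (Vi \<union> Vj) (bridged Ei Ej k l) M"
      by (rule in_Q_imp_offdiag_pattern)
    show "controllable (Vi \<union> Vj) M (Ii \<union> Ij) att"
    proof (rule controllable_if_eigenvectors_observable[OF fV fI att])
      show "\<And>i j. i \<in> Vi \<union> Vj \<Longrightarrow> j \<in> Vi \<union> Vj \<Longrightarrow> M i j = M j i"
        using pat unfolding offdiag_pattern_def by blast
    qed (rule bridged_eigenvector_zero[OF assms(1-3,5-8) pat])
  qed
  moreover have "bridged Ei Ej k l = (\<lambda>a b. Ei a b \<or> Ej a b \<or> (a = k \<and> b = l) \<or> (a = l \<and> b = k))"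
    by (simp add: fun_eq_iff bridged_def)
  ultimately show ?thesis
    by simp
qed

end
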